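(* Fix $k\in\mathbb N$ and let $N_n(k)$ be the number of clades with exactly $k$ leaves in the critical beta-splitting tree $\mathrm{DTCS}(n)$. Let $E_n=\frac1n\mathbb E[N_n(k)]$. There exists a constant $\mu=\mu(k)$ such that $E_n=\mu+O(1/n)$.
   Context: For $m\ge2$, $q_m(i)=\frac{m}{2h_{m-1}}\frac{1}{i(m-i)}$, $1\le i\le m-1$, with $h_{m-1}=\sum_{j=1}^{m-1}1/j$. $\mathrm{DTCS}(n)$ is the random binary tree with leaves $[n]$ obtained by splitting $[n]$ into $\{1,\dots,L_n\}$ and $\{L_n+1,\dots,n\}$ with $L_n\sim q_n$, and recursively and independently splitting each interval of size $m\ge2$ according to $q_m$, stopping at size $1$. A clade (fringe subtree) is a vertex together with all its descendants; its size is its number of leaves. *)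

theory Defs
  imports "HOL-Probability.Probability" "HOL-Library.Landau_Symbols"
begin

definition q_split :: "nat \<Rightarrow> nat \<Rightarrow> real" where
  "q_split m i = (if 1 \<le> i \<and> i \<le> m - 1
     then real m / (2 * (\<Sum>j=1..m-1. 1 / real j)) * (1 / (real i * real (m - i)))
     else 0)"

definition q_pmf :: "nat \<Rightarrow> nat pmf" where
  "q_pmf m = embed_pmf (q_split m)"

text \<open>Binary tree shapes; the leaves of a tree of size n are labelled 1..n left to right,
  so the shape determines the labelled tree.\<close>
datatype tree = Leaf | Node tree tree

fun leaves :: "tree \<Rightarrow> nat" where
  "leaves Leaf = 1"
| "leaves (Node l r) = leaves l + leaves r"

fun nclades :: "nat \<Rightarrow> tree \<Rightarrow> nat" where
  "nclades k Leaf = (if k = 1 then 1 else 0)"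
| "nclades k (Node l r) = (if leaves (Node l r) = k then 1 else 0) + nclades k l + nclades k r"

text \<open>Recursive splitting, with a fuel parameter (fuel n suffices for size n, since sizes
  strictly decrease).\<close>
fun dtcs_aux :: "nat \<Rightarrow> nat \<Rightarrow> tree pmf" where
  "dtcs_aux 0 n = return_pmf Leaf"
| "dtcs_aux (Suc f) n =
     (if n \<le> 1 then return_pmf Leaf
      else bind_pmf (q_pmf n) (\<lambda>i.
             bind_pmf (dtcs_aux f i) (\<lambda>l.
               bind_pmf (dtcs_aux f (n - i)) (\<lambda>r. return_pmf (Node l r)))))"

definition DTCS :: "nat \<Rightarrow> tree pmf" where
  "DTCS n = dtcs_aux n n"

end

theory Submission
  imports Defs "HOL-Computational_Algebra.Polynomial"
begin

text \<open>
  For \<open>k \<ge> 2\<close> the mean \<open>a\<^sub>n = E N\<^sub>n(k)\<close> satisfies \<open>a\<^sub>n = [n = k] + \<Sum>\<^sub>i q\<^sub>n(i) (a\<^sub>i + a\<^sub>n\<^sub>-\<^sub>i)\<close>, and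
  by the symmetry of \<open>q\<^sub>n\<close> this makes \<open>k a\<^sub>n / n\<close> the renewal kernel \<open>G(n, k)\<close> with step weights
  \<open>1 / (h\<^sub>j\<^sub>-\<^sub>1 (j - i))\<close>. Splitting off the first rather than the last step, together with an
  alternating binomial identity for harmonic numbers, gives the closed form
  \<open>G(n, k) = h\<^sub>k\<^sub>-\<^sub>1 C(n-1, k-1) \<Delta>\<^bsup>n-k\<^esup>\<phi>(k-1)\<close> with \<open>\<phi>(j) = 1 / h\<^sub>j\<close> and the signed
  difference \<open>\<Delta>\<^bsup>N\<^esup>f(a) = \<Sum>\<^sub>l C(N, l) (-1)\<^sup>l f(a + l)\<close>.

  Write \<open>\<phi>(j) = (6/\<pi>\<^sup>2) / j + \<psi>(j)\<close>. Since \<open>C(a+N, a) \<Delta>\<^bsup>N\<^esup>(1/j)(a) = 1/a\<close>, the first part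
  contributes exactly \<open>(6/\<pi>\<^sup>2) h\<^sub>k\<^sub>-\<^sub>1 / (k - 1)\<close>. The remainder \<open>\<psi>\<close> is completely monotone: it is
  the limit of \<open>1 / \<Phi>\<^sub>K(j) - A\<^sub>K / j\<close>, where \<open>\<Phi>\<^sub>K(s) = \<Sum>\<^sub>k\<^sub>\<le>\<^sub>K s / (k (k + s))\<close> interpolates the
  harmonic numbers and \<open>1 / \<Phi>\<^sub>K\<close> has the partial fraction expansion
  \<open>1/h\<^sub>K + A\<^sub>K/s + \<Sum>\<^sub>i w\<^sub>i / (s - \<lambda>\<^sub>i)\<close> with \<open>0 < w\<^sub>i < 1\<close> and \<open>-i-1 < \<lambda>\<^sub>i < -i\<close>. The differences of
  the simple fractions are Beta values, which telescope to give
  \<open>0 \<le> C(n-1, k-1) \<Delta>\<^bsup>n-k\<^esup>\<psi>(k-1) \<le> 1/(n-k)\<close>. Hence \<open>E N\<^sub>n(k) / n = \<mu> + O(1/n)\<close> with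
  \<open>\<mu> = (6/\<pi>\<^sup>2) h\<^sub>k\<^sub>-\<^sub>1 / (k (k - 1))\<close>; for \<open>k \<le> 1\<close> the count \<open>N\<^sub>n(k) = k n\<close> is deterministic.
\<close>

lemma harm_neq_0: "n \<ge> 1 \<Longrightarrow> harm n \<noteq> (0::real)"
  using harm_pos_iff[of n, where 'a = real] by linarith

section \<open>Finite differences and Beta values\<close>

text \<open>\<open>fdiff N f a\<close> is \<open>(-1)\<^sup>N\<close> times the \<open>N\<close>-th forward difference of \<open>f\<close> at \<open>a\<close>.\<close>

definition fdiff :: "nat \<Rightarrow> (nat \<Rightarrow> real) \<Rightarrow> nat \<Rightarrow> real" where
  "fdiff N f a = (\<Sum>l=0..N. real (N choose l) * (-1)^l * f (a + l))"

lemma fdiff_0 [simp]: "fdiff 0 f a = f a"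
  by (simp add: fdiff_def)

lemma fdiff_Suc: "fdiff (Suc N) f a = fdiff N f a - fdiff N f (Suc a)"
proof -
  define g where "g l = (-1)^l * f (a + l)" for l
  have shift: "(\<Sum>l=0..Suc N. real (M choose l) * g l)
      = g 0 + (\<Sum>l=0..N. real (M choose Suc l) * g (Suc l))" for M
    by (subst sum.atLeast0_atMost_Suc_shift) simp
  have "fdiff (Suc N) f a = (g 0 + (\<Sum>l=0..N. real (N choose Suc l) * g (Suc l)))
      + (\<Sum>l=0..N. real (N choose l) * g (Suc l))"
    unfolding fdiff_def mult.assoc g_def[symmetric] shift
    by (simp add: sum.distrib algebra_simps)
  moreover have "g 0 + (\<Sum>l=0..N. real (N choose Suc l) * g (Suc l)) = fdiff N f a"
    unfolding shift[of N, symmetric] by (simp add: fdiff_def g_def mult.assoc)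
  moreover have "(\<Sum>l=0..N. real (N choose l) * g (Suc l)) = - fdiff N f (Suc a)"
    by (simp add: fdiff_def g_def sum_negf[symmetric] mult.assoc)
  ultimately show ?thesis by simp
qed

lemma fdiff_cong:
  assumes "\<And>l. l \<le> N \<Longrightarrow> f (a + l) = g (a + l)"
  shows "fdiff N f a = fdiff N g a"
  unfolding fdiff_def by (rule sum.cong) (use assms in auto)

lemma fdiff_add: "fdiff N (\<lambda>j. f j + g j) a = fdiff N f a + fdiff N g a"
  by (simp add: fdiff_def algebra_simps sum.distrib)

lemma fdiff_cmult: "fdiff N (\<lambda>j. c * f j) a = c * fdiff N f a"
  by (simp add: fdiff_def sum_distrib_left algebra_simps)

lemma fdiff_sum: "fdiff N (\<lambda>j. \<Sum>i\<in>S. f i j) a = (\<Sum>i\<in>S. fdiff N (f i) a)"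
  unfolding fdiff_def sum_distrib_left by (rule sum.swap)

lemma fdiff_const: "N \<ge> 1 \<Longrightarrow> fdiff N (\<lambda>_. c) a = 0"
  by (cases N) (simp_all add: fdiff_Suc, simp add: fdiff_def)

text \<open>\<open>beta_quot z N = B(z, N + 1)\<close>.\<close>

definition beta_quot :: "real \<Rightarrow> nat \<Rightarrow> real" where
  "beta_quot z N = fact N / (\<Prod>l=0..N. z + real l)"

lemma beta_quot_pos: "z > 0 \<Longrightarrow> beta_quot z N > 0"
  unfolding beta_quot_def by (intro divide_pos_pos prod_pos) auto

lemma beta_quot_antimono:
  assumes "0 < z" "z \<le> w"
  shows "beta_quot w N \<le> beta_quot z N"
  unfolding beta_quot_def
  by (rule divide_left_mono) (use assms in \<open>auto intro!: prod_mono prod_pos mult_pos_pos\<close>)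

lemma prod_add_of_nat_Suc_shift: "(\<Prod>l=0..Suc N. z + real l) = z * (\<Prod>l=0..N. z + 1 + real l)"
  by (subst prod.atLeast0_atMost_Suc_shift) (simp add: add.assoc)

lemma beta_quot_Suc_shift:
  assumes "z > 0"
  shows "beta_quot z (Suc N) = real (Suc N) / z * beta_quot (z + 1) N"
  using assms unfolding beta_quot_def prod_add_of_nat_Suc_shift by simp

lemma beta_quot_Suc: "beta_quot z (Suc N) = beta_quot z N * (real (Suc N) / (z + real (Suc N)))"
  by (simp add: beta_quot_def prod.atLeast0_atMost_Suc)

lemma beta_quot_diff:
  assumes "z > 0"
  shows "beta_quot z N - beta_quot (z + 1) N = beta_quot z (Suc N)"
proof -
  have "(\<Prod>l=0..N. z + 1 + real l) = (\<Prod>l=0..N. z + real l) * (z + real (Suc N)) / z"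
    using prod_add_of_nat_Suc_shift[of z N] assms by (simp add: prod.atLeast0_atMost_Suc)
  then have "beta_quot (z + 1) N = beta_quot z N * (z / (z + real (Suc N)))"
    by (simp add: beta_quot_def)
  then have "beta_quot z N - beta_quot (z + 1) N = beta_quot z N * (1 - z / (z + real (Suc N)))"
    by (simp add: right_diff_distrib)
  also have "1 - z / (z + real (Suc N)) = real (Suc N) / (z + real (Suc N))"
    using assms by (simp add: field_simps)
  finally show ?thesis
    by (simp add: beta_quot_Suc)
qed

lemma fdiff_inverse:
  assumes "real a + t > 0"
  shows "fdiff N (\<lambda>j. 1 / (real j + t)) a = beta_quot (real a + t) N"
  using assms
proof (induction N arbitrary: a)
  case 0
  then show ?case by (simp add: beta_quot_def)
next
  case (Suc N)
  then show ?case
    using beta_quot_diff[of "real a + t" N] by (simp add: fdiff_Suc add_ac)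
qed

lemma sum_beta_quot_le:
  assumes "z > 0"
  shows "(\<Sum>i=1..M. beta_quot (z + real i) (Suc N)) \<le> beta_quot (z + 1) N"
proof -
  have "(\<Sum>i=1..M. beta_quot (z + real i) (Suc N)) = beta_quot (z + 1) N - beta_quot (z + real M + 1) N"
    by (induction M) (use assms beta_quot_diff[symmetric] in \<open>simp_all add: add_ac\<close>)
  with beta_quot_pos[of "z + real M + 1" N] assms show ?thesis by simp
qed

lemma binomial_beta_quot:
  assumes "a \<ge> 1"
  shows "real (a + N choose a) * beta_quot (real a) N = 1 / real a"
proof (induction N)
  case 0
  then show ?case by (simp add: beta_quot_def)
next
  case (Suc N)
  define C0 C1 where "C0 = real (a + N choose a)" and "C1 = real (a + Suc N choose a)"
  have "Suc N * (a + Suc N choose a) = (a + Suc N) * (a + N choose a)"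
    using binomial_absorb_comp[of "a + Suc N" a] by simp
  then have "real (Suc N) * C1 = real (a + Suc N) * C0"
    unfolding C0_def C1_def by (metis of_nat_mult)
  then have "C1 = C0 * (real (a + Suc N) / real (Suc N))"
    by (simp add: field_simps)
  moreover have "beta_quot (real a) (Suc N) = beta_quot (real a) N * (real (Suc N) / real (a + Suc N))"
    unfolding beta_quot_Suc of_nat_add ..
  ultimately show ?case
    using Suc.IH unfolding C0_def[symmetric] C1_def[symmetric] by simp
qed

lemma binomial_beta_quot_shift:
  assumes "a \<ge> 1" "N \<ge> 1"
  shows "real (a + N choose a) * beta_quot (real a + 1) (N - 1) = 1 / real N"
proof -
  have "real (a + N choose a) * (real N / real a * beta_quot (real a + 1) (N - 1)) = 1 / real a"
    using binomial_beta_quot[OF assms(1), of N] beta_quot_Suc_shift[of "real a" "N - 1"] assms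
    by simp
  with assms show ?thesis by (simp add: field_simps)
qed

section \<open>A rational interpolation of the harmonic numbers\<close>

definition harm_approx :: "nat \<Rightarrow> real \<Rightarrow> real" where
  "harm_approx K s = (\<Sum>k=1..K. s / (real k * (real k + s)))"

lemma harm_approx_of_nat: "harm_approx K (real j) = harm j - (\<Sum>i=1..j. 1 / real (K + i))"
proof -
  have "harm_approx K (real j) = harm j + harm K - harm (K + j)"
  proof (induction K)
    case (Suc K)
    have "real j / (real (Suc K) * (real (Suc K) + real j)) = 1 / real (Suc K) - 1 / real (Suc K + j)"
      by (simp add: field_simps)
    with Suc show ?case
      by (simp add: harm_approx_def harm_Suc inverse_eq_divide)
  qed (simp add: harm_approx_def harm_expand)
  moreover have "(\<Sum>i=1..j. 1 / real (K + i)) = harm (K + j) - harm K"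
    by (induction j) (simp_all add: harm_Suc inverse_eq_divide)
  ultimately show ?thesis by simp
qed

lemma harm_approx_tendsto: "(\<lambda>K. harm_approx K (real j)) \<longlonglongrightarrow> harm j"
proof -
  have "(\<lambda>K. 1 / real (K + i)) \<longlonglongrightarrow> 0" for i
    by (rule LIMSEQ_ignore_initial_segment[OF lim_1_over_n])
  then have "(\<lambda>K. \<Sum>i=1..j. 1 / real (K + i)) \<longlonglongrightarrow> 0"
    by (rule tendsto_null_sum)
  from tendsto_diff[OF tendsto_const this] show ?thesis
    unfolding harm_approx_of_nat by simp
qed

lemma harm_approx_diff:
  assumes "\<forall>k\<in>{1..K}. real k + s \<noteq> 0" "\<forall>k\<in>{1..K}. real k + t \<noteq> 0"
  shows "harm_approx K s - harm_approx K t = (s - t) * (\<Sum>k=1..K. 1 / ((real k + s) * (real k + t)))"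
  unfolding harm_approx_def sum_subtractf[symmetric] sum_distrib_left
proof (rule sum.cong[OF refl])
  fix k assume "k \<in> {1..K}"
  with assms have "real k \<noteq> 0" "real k + s \<noteq> 0" "real k + t \<noteq> 0" by auto
  then show "s / (real k * (real k + s)) - t / (real k * (real k + t))
      = (s - t) * (1 / ((real k + s) * (real k + t)))"
    by (simp add: divide_simps) (simp add: algebra_simps)
qed

definition denom_poly :: "nat \<Rightarrow> real poly" where
  "denom_poly K = (\<Prod>k\<in>{1..K}. [:real k, 1:])"

definition pfrac_numer :: "nat \<Rightarrow> (nat \<Rightarrow> real) \<Rightarrow> real poly" where
  "pfrac_numer K c = (\<Sum>k\<in>{1..K}. smult (c k) (\<Prod>j\<in>{1..K}-{k}. [:real j, 1:]))"

lemma poly_denom_poly: "poly (denom_poly K) s = (\<Prod>k=1..K. real k + s)"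
  by (simp add: denom_poly_def poly_prod add.commute)

lemma poly_denom_poly_pos: "s \<ge> 0 \<Longrightarrow> poly (denom_poly K) s > 0"
  unfolding poly_denom_poly by (intro prod_pos) auto

lemma degree_denom_poly: "degree (denom_poly K) = K"
  unfolding denom_poly_def by (subst degree_prod_eq_sum_degree) auto

lemma coeff_denom_poly: "coeff (denom_poly K) K = 1"
  using lead_coeff_prod[of "\<lambda>k. [:real k, 1:]" "{1..K}"] degree_denom_poly[of K]
  by (simp add: denom_poly_def)

lemma poly_pfrac_numer: "poly (pfrac_numer K c) s = (\<Sum>k=1..K. c k * (\<Prod>j\<in>{1..K}-{k}. real j + s))"
  by (simp add: pfrac_numer_def poly_sum poly_prod add.commute)

lemma poly_pfrac_numer_eq:
  assumes "\<forall>k\<in>{1..K}. real k + s \<noteq> 0"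
  shows "poly (pfrac_numer K c) s = poly (denom_poly K) s * (\<Sum>k=1..K. c k / (real k + s))"
  unfolding poly_pfrac_numer sum_distrib_left
proof (rule sum.cong[OF refl])
  fix k assume k: "k \<in> {1..K}"
  then have "(\<Prod>j=1..K. real j + s) = (real k + s) * (\<Prod>j\<in>{1..K}-{k}. real j + s)"
    by (simp add: prod.remove)
  with assms k show "c k * (\<Prod>j\<in>{1..K}-{k}. real j + s) = poly (denom_poly K) s * (c k / (real k + s))"
    by (simp add: poly_denom_poly)
qed

lemma poly_pfrac_numer_pole:
  assumes "k \<in> {1..K}"
  shows "poly (pfrac_numer K c) (- real k) = c k * (\<Prod>j\<in>{1..K}-{k}. real j - real k)"
proof -
  have "(\<Sum>k'\<in>{1..K}-{k}. c k' * (\<Prod>j\<in>{1..K}-{k'}. real j - real k)) = 0"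
  proof (intro sum.neutral ballI)
    fix k' assume "k' \<in> {1..K} - {k}"
    with assms have "(\<Prod>j\<in>{1..K}-{k'}. real j - real k) = 0"
      by (intro prod_zero) auto
    then show "c k' * (\<Prod>j\<in>{1..K}-{k'}. real j - real k) = 0" by simp
  qed
  with assms show ?thesis
    unfolding poly_pfrac_numer by (simp add: sum.remove)
qed

lemma degree_pfrac_numer: "degree (pfrac_numer K c) \<le> K - 1"
  unfolding pfrac_numer_def
  by (intro degree_sum_le order.trans[OF degree_smult_le])
     (auto simp: degree_prod_eq_sum_degree)

lemma coeff_pfrac_numer: "coeff (pfrac_numer K c) (K - 1) = (\<Sum>k=1..K. c k)"
proof -
  have "coeff (\<Prod>j\<in>{1..K}-{k}. [:real j, 1:]) (K - 1) = 1" if "k \<in> {1..K}" for k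
    using that lead_coeff_prod[of "\<lambda>j. [:real j, 1:]" "{1..K}-{k}"]
    by (simp add: degree_prod_eq_sum_degree)
  then show ?thesis
    by (simp add: pfrac_numer_def coeff_sum)
qed

abbreviation harm_numer :: "nat \<Rightarrow> real poly" where
  "harm_numer K \<equiv> pfrac_numer K (\<lambda>k. 1 / real k)"

lemma harm_approx_poly:
  assumes "\<forall>k\<in>{1..K}. real k + s \<noteq> 0"
  shows "harm_approx K s * poly (denom_poly K) s = s * poly (harm_numer K) s"
  unfolding poly_pfrac_numer_eq[OF assms] harm_approx_def sum_distrib_left sum_distrib_right
  by (intro sum.cong) auto

lemma poly_harm_numer_pos: "s \<ge> 0 \<Longrightarrow> K \<ge> 1 \<Longrightarrow> poly (harm_numer K) s > 0"
  unfolding poly_pfrac_numer by (intro sum_pos mult_pos_pos prod_pos) auto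

lemma coeff_harm_numer: "coeff (harm_numer K) (K - 1) = harm K"
  unfolding coeff_pfrac_numer harm_def by (simp add: inverse_eq_divide)

lemma sign_harm_numer_pole:
  assumes k: "k \<in> {1..K}"
  shows "(-1)^k * poly (harm_numer K) (- real k) < 0"
proof -
  have split: "{1..K}-{k} = {1..<k} \<union> {k<..K}" using k by auto
  have "(\<Prod>j\<in>{1..<k}. real j - real k) = (-1)^(k - 1) * (\<Prod>j\<in>{1..<k}. real k - real j)"
    using prod_uminus[of "\<lambda>j. real k - real j" "{1..<k}"] by simp
  then have "(\<Prod>j\<in>{1..K}-{k}. real j - real k)
      = (-1)^(k - 1) * ((\<Prod>j\<in>{1..<k}. real k - real j) * (\<Prod>j\<in>{k<..K}. real j - real k))"
    unfolding split by (subst prod.union_disjoint) auto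
  moreover have "(\<Prod>j\<in>{1..<k}. real k - real j) * (\<Prod>j\<in>{k<..K}. real j - real k) > 0"
    by (intro mult_pos_pos prod_pos) auto
  moreover have "(-1::real)^k * (-1)^(k - 1) = -1"
    using k by (cases k) auto
  ultimately show ?thesis
    using k by (simp add: poly_pfrac_numer_pole mult.assoc[symmetric] mult_neg_pos)
qed

definition numer_root :: "nat \<Rightarrow> nat \<Rightarrow> real" where
  "numer_root K i = (SOME x. - real (Suc i) < x \<and> x < - real i \<and> poly (harm_numer K) x = 0)"

lemma numer_root:
  assumes "1 \<le> i" "i < K"
  shows "- real (Suc i) < numer_root K i \<and> numer_root K i < - real i
    \<and> poly (harm_numer K) (numer_root K i) = 0"
proof -
  let ?u = "poly (harm_numer K) (- real i)" and ?v = "poly (harm_numer K) (- real (Suc i))"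
  have "(-1)^i * ?u < 0"
    by (rule sign_harm_numer_pole) (use assms in auto)
  moreover have "(-1)^Suc i * ?v < 0"
    by (rule sign_harm_numer_pole) (use assms in auto)
  ultimately have "0 < ((-1)^i * ?u) * ((-1)^Suc i * ?v)"
    by (rule mult_neg_neg)
  also have "\<dots> = - (((-1)^i)\<^sup>2 * (?v * ?u))"
    by (simp add: power2_eq_square algebra_simps)
  finally have "?v * ?u < 0"
    by (simp add: power_even_eq[symmetric] power_mult_distrib[symmetric])
  then have "\<exists>x. - real (Suc i) < x \<and> x < - real i \<and> poly (harm_numer K) x = 0"
    using poly_IVT[of "- real (Suc i)" "- real i"] by auto
  then show ?thesis
    unfolding numer_root_def by (rule someI_ex)
qed

lemma numer_root_neg: "1 \<le> i \<Longrightarrow> i < K \<Longrightarrow> numer_root K i < 0"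
  using numer_root[of i K] by simp

lemma numer_root_shift_nonzero:
  assumes "1 \<le> i" "i < K"
  shows "real k + numer_root K i \<noteq> 0"
  using numer_root[OF assms] by (cases "k \<le> i") (auto simp: not_le)

lemma numer_root_strict_antimono:
  assumes "1 \<le> i" "i < i'" "i' < K"
  shows "numer_root K i' < numer_root K i"
  using numer_root[of i K] numer_root[of i' K] assms by auto

lemma inj_on_numer_root: "inj_on (numer_root K) {1..<K}"
proof (rule inj_onI)
  fix i i' assume "i \<in> {1..<K}" "i' \<in> {1..<K}" "numer_root K i = numer_root K i'"
  then show "i = i'"
    using numer_root_strict_antimono[of i i' K] numer_root_strict_antimono[of i' i K]
    by (cases i i' rule: linorder_cases) auto
qed

definition numer_quot :: "nat \<Rightarrow> nat \<Rightarrow> real poly" where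
  "numer_quot K i = synthetic_div (harm_numer K) (numer_root K i)"

lemma harm_numer_factor:
  assumes "1 \<le> i" "i < K"
  shows "harm_numer K = [:- numer_root K i, 1:] * numer_quot K i"
  using synthetic_div_correct'[of "numer_root K i" "harm_numer K"] numer_root[OF assms]
  by (simp add: numer_quot_def)

lemma poly_numer_quot:
  assumes "1 \<le> i" "i < K" "s \<noteq> numer_root K i"
  shows "poly (numer_quot K i) s = poly (harm_numer K) s / (s - numer_root K i)"
  using assms by (subst harm_numer_factor[OF assms(1,2)]) (simp add: field_simps)

lemma degree_numer_quot: "degree (numer_quot K i) \<le> K - 2"
  using degree_pfrac_numer[of K "\<lambda>k. 1 / real k"]
  unfolding numer_quot_def degree_synthetic_div by linarith

text \<open>The residue of \<open>1 / harm_approx K\<close> at its zero \<open>\<lambda> = numer_root K i\<close> is the inverse of the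
  derivative \<open>\<Sum>k. 1 / (k + \<lambda>)\<^sup>2\<close>; in polynomial form that derivative appears as the value of
  the quotient \<open>numer_quot K i\<close> at \<open>\<lambda>\<close>.\<close>

lemma numer_root_residue:
  assumes i: "1 \<le> i" "i < K"
  defines "z \<equiv> numer_root K i"
  shows "z * poly (numer_quot K i) z = poly (denom_poly K) z * (\<Sum>k=1..K. 1 / (real k + z)\<^sup>2)"
proof -
  define Y where "Y = pfrac_numer K (\<lambda>k. 1 / (real k + z))"
  have z_ne: "\<forall>k\<in>{1..K}. real k + z \<noteq> 0"
    using numer_root_shift_nonzero[OF i] by (simp add: z_def)
  have "harm_approx K z * poly (denom_poly K) z = 0"
    using harm_approx_poly[OF z_ne] numer_root[OF i] by (simp add: z_def)
  moreover have "poly (denom_poly K) z \<noteq> 0"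
    using z_ne by (simp add: poly_denom_poly)
  ultimately have harm_approx_z: "harm_approx K z = 0" by simp
  have "poly (pCons 0 (numer_quot K i)) s = poly Y s" if s: "s \<in> real ` {1..K}" for s
  proof -
    have s_ne: "\<forall>k\<in>{1..K}. real k + s \<noteq> 0" and "s \<noteq> z"
      using s numer_root_neg[OF i] by (auto simp: z_def)
    then have "poly (pCons 0 (numer_quot K i)) s = harm_approx K s * poly (denom_poly K) s / (s - z)"
      using harm_approx_poly[OF s_ne] poly_numer_quot[OF i] by (simp add: z_def)
    also have "\<dots> = poly (denom_poly K) s * (\<Sum>k=1..K. 1 / ((real k + s) * (real k + z)))"
      using harm_approx_diff[OF s_ne z_ne] harm_approx_z \<open>s \<noteq> z\<close> by simp
    also have "\<dots> = poly Y s"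
      unfolding Y_def poly_pfrac_numer_eq[OF s_ne] by (simp add: mult.commute)
    finally show ?thesis .
  qed
  then have "pCons 0 (numer_quot K i) = Y"
    using i degree_numer_quot[of K i] degree_pfrac_numer[of K "\<lambda>k. 1 / (real k + z)"]
    by (intro poly_eqI_degree[where A = "real ` {1..K}"]) (auto simp: card_image Y_def)
  then have "z * poly (numer_quot K i) z = poly Y z"
    by (metis poly_pCons add_0)
  also have "\<dots> = poly (denom_poly K) z * (\<Sum>k=1..K. 1 / (real k + z)\<^sup>2)"
    unfolding Y_def poly_pfrac_numer_eq[OF z_ne] by (simp add: power2_eq_square)
  finally show ?thesis .
qed

definition root_weight :: "nat \<Rightarrow> nat \<Rightarrow> real" where
  "root_weight K i = 1 / (\<Sum>k=1..K. 1 / (real k + numer_root K i)\<^sup>2)"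

lemma root_weight_bounds:
  assumes "1 \<le> i" "i < K"
  shows "0 < root_weight K i \<and> root_weight K i < 1"
proof -
  let ?z = "numer_root K i"
  have "0 < real (Suc i) + ?z" "real (Suc i) + ?z < 1"
    using numer_root[OF assms] by auto
  then have "1 < 1 / (real (Suc i) + ?z)\<^sup>2"
    by (simp add: power_less_one_iff)
  also have "\<dots> \<le> (\<Sum>k=1..K. 1 / (real k + ?z)\<^sup>2)"
    by (rule member_le_sum) (use assms in auto)
  finally show ?thesis
    by (simp add: root_weight_def)
qed

lemma root_weight_residue:
  assumes "1 \<le> i" "i < K"
  shows "root_weight K i * (numer_root K i * poly (numer_quot K i) (numer_root K i))
    = poly (denom_poly K) (numer_root K i)"
  using root_weight_bounds[OF assms]
  unfolding numer_root_residue[OF assms] root_weight_def by simp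

definition basel_inv :: "nat \<Rightarrow> real" where
  "basel_inv K = 1 / (\<Sum>k=1..K. 1 / (real k)\<^sup>2)"

lemma basel_inv_residue:
  assumes "K \<ge> 1"
  shows "basel_inv K * poly (harm_numer K) 0 = poly (denom_poly K) 0"
proof -
  have "(\<Sum>k=1..K. 1 / (real k)\<^sup>2) > 0"
    using assms by (intro sum_pos) auto
  then show ?thesis
    using poly_pfrac_numer_eq[of K 0] by (simp add: basel_inv_def power2_eq_square)
qed

lemma basel_inv_tendsto: "basel_inv \<longlonglongrightarrow> 6 / pi\<^sup>2"
proof -
  have "(\<lambda>K. \<Sum>n<K. 1 / (real n + 1)\<^sup>2) \<longlonglongrightarrow> pi\<^sup>2 / 6"
    using inverse_squares_sums by (simp add: sums_def add.commute)
  moreover have "(\<Sum>n<K. 1 / (real n + 1)\<^sup>2) = (\<Sum>k=1..K. 1 / (real k)\<^sup>2)" for K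
    by (induction K) simp_all
  ultimately have "(\<lambda>K. 1 / (\<Sum>k=1..K. 1 / (real k)\<^sup>2)) \<longlonglongrightarrow> 1 / (pi\<^sup>2 / 6)"
    by (intro tendsto_divide tendsto_const) auto
  then show ?thesis
    by (simp add: basel_inv_def[abs_def])
qed

text \<open>The numerator of the expansion of \<open>1 / harm_approx K s\<close> into simple fractions, over the
  common denominator \<open>s * harm_numer K s\<close>.\<close>

definition pfrac_expansion :: "nat \<Rightarrow> real poly" where
  "pfrac_expansion K = smult (1 / harm K) (pCons 0 (harm_numer K)) + smult (basel_inv K) (harm_numer K)
    + (\<Sum>i\<in>{1..<K}. smult (root_weight K i) (pCons 0 (numer_quot K i)))"

lemma degree_pfrac_expansion: "K \<ge> 1 \<Longrightarrow> degree (pfrac_expansion K) \<le> K"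
proof -
  assume K: "K \<ge> 1"
  have "degree (pCons 0 (numer_quot K i)) \<le> K" for i
    using degree_numer_quot[of K i] K by (cases "numer_quot K i = 0") auto
  then show ?thesis
    unfolding pfrac_expansion_def using K degree_pfrac_numer[of K "\<lambda>k. 1 / real k"]
    by (intro degree_add_le degree_sum_le order.trans[OF degree_smult_le]) (auto simp del: smult_pCons)
qed

lemma coeff_pfrac_expansion: "K \<ge> 1 \<Longrightarrow> coeff (pfrac_expansion K) K = 1"
proof -
  assume K: "K \<ge> 1"
  have "coeff (pCons 0 (harm_numer K)) K = harm K"
    using K coeff_harm_numer[of K] by (cases K) auto
  moreover have "coeff (harm_numer K) K = 0"
    using K degree_pfrac_numer[of K "\<lambda>k. 1 / real k"] by (intro coeff_eq_0) auto
  moreover have "coeff (pCons 0 (numer_quot K i)) K = 0" if "i \<in> {1..<K}" for i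
    using that degree_numer_quot[of K i] by (cases K) (auto intro: coeff_eq_0)
  moreover have "harm K \<noteq> (0::real)"
    using K by (rule harm_neq_0)
  ultimately show ?thesis
    by (simp add: pfrac_expansion_def coeff_sum del: smult_pCons)
qed

lemma poly_pfrac_expansion_numer_root:
  assumes "1 \<le> i" "i < K"
  shows "poly (pfrac_expansion K) (numer_root K i) = poly (denom_poly K) (numer_root K i)"
proof -
  let ?z = "numer_root K i"
  have Q_z: "poly (harm_numer K) ?z = 0"
    using numer_root[OF assms] by simp
  have "poly (numer_quot K i') ?z = 0" if "i' \<in> {1..<K} - {i}" for i'
  proof -
    have "?z \<noteq> numer_root K i'"
      using that assms inj_onD[OF inj_on_numer_root[of K], of i i'] by auto
    with that show ?thesis
      using Q_z poly_numer_quot[of i' K ?z] by simp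
  qed
  then have "poly (pfrac_expansion K) ?z = root_weight K i * (?z * poly (numer_quot K i) ?z)"
    using assms by (simp add: pfrac_expansion_def poly_sum Q_z sum.remove)
  then show ?thesis
    using root_weight_residue[OF assms] by simp
qed

lemma denom_poly_eq_pfrac_expansion:
  assumes K: "K \<ge> 1"
  shows "denom_poly K = pfrac_expansion K"
proof (rule poly_eqI_degree_lead_coeff[of _ K _ "insert 0 (numer_root K ` {1..<K})"])
  have "0 \<notin> numer_root K ` {1..<K}"
    using numer_root_neg by fastforce
  then show "K \<le> card (insert 0 (numer_root K ` {1..<K}))"
    using K card_image[OF inj_on_numer_root[of K]] by simp
  fix z assume "z \<in> insert 0 (numer_root K ` {1..<K})"
  then show "poly (denom_poly K) z = poly (pfrac_expansion K) z"
    using basel_inv_residue[OF K] poly_pfrac_expansion_numer_root[of _ K]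
    by (auto simp: pfrac_expansion_def poly_sum)
qed (use K in \<open>simp_all add: coeff_denom_poly coeff_pfrac_expansion degree_denom_poly degree_pfrac_expansion\<close>)

lemma inverse_harm_approx_pfrac:
  assumes K: "K \<ge> 1" and s: "s > 0"
  shows "1 / harm_approx K s
    = 1 / harm K + basel_inv K / s + (\<Sum>i\<in>{1..<K}. root_weight K i / (s - numer_root K i))"
proof -
  have s_ne: "\<forall>k\<in>{1..K}. real k + s \<noteq> 0"
    using s by auto
  define Q where "Q = poly (harm_numer K) s"
  have Q: "Q > 0"
    using poly_harm_numer_pos[OF _ K] s by (simp add: Q_def)
  have "poly (numer_quot K i) s = Q / (s - numer_root K i)" if "i \<in> {1..<K}" for i
    using that s numer_root_neg[of i K] poly_numer_quot[of i K s] by (simp add: Q_def)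
  then have "poly (denom_poly K) s = s * Q / harm K + basel_inv K * Q
      + (\<Sum>i\<in>{1..<K}. root_weight K i * (s * Q / (s - numer_root K i)))"
    unfolding denom_poly_eq_pfrac_expansion[OF K] pfrac_expansion_def
    by (simp add: poly_sum Q_def mult.left_commute)
  moreover have "harm_approx K s = s * Q / poly (denom_poly K) s"
    using harm_approx_poly[OF s_ne] poly_denom_poly_pos[of s K] s by (simp add: Q_def field_simps)
  then have "1 / harm_approx K s = poly (denom_poly K) s / (s * Q)"
    by simp
  ultimately show ?thesis
    using s Q by (simp add: add_divide_distrib sum_divide_distrib)
qed

lemma fdiff_inverse_harm_approx:
  assumes K: "K \<ge> 1" and N: "N \<ge> 1" and a: "a \<ge> 1"
  shows "fdiff N (\<lambda>j. 1 / harm_approx K (real j) - basel_inv K / real j) a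
    = (\<Sum>i\<in>{1..<K}. root_weight K i * beta_quot (real a - numer_root K i) N)"
proof -
  have "fdiff N (\<lambda>j. 1 / harm_approx K (real j) - basel_inv K / real j) a
      = fdiff N (\<lambda>j. 1 / harm K + (\<Sum>i\<in>{1..<K}. root_weight K i * (1 / (real j + - numer_root K i)))) a"
    using a by (intro fdiff_cong) (simp add: inverse_harm_approx_pfrac[OF K])
  also have "\<dots> = (\<Sum>i\<in>{1..<K}. root_weight K i * fdiff N (\<lambda>j. 1 / (real j + - numer_root K i)) a)"
    unfolding fdiff_add fdiff_sum fdiff_cmult fdiff_const[OF N] by simp
  also have "\<dots> = (\<Sum>i\<in>{1..<K}. root_weight K i * beta_quot (real a - numer_root K i) N)"
  proof (intro sum.cong refl)
    fix i assume "i \<in> {1..<K}"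
    then have "real a + - numer_root K i > 0"
      using numer_root_neg[of i K] by simp
    from fdiff_inverse[OF this] show "root_weight K i * fdiff N (\<lambda>j. 1 / (real j + - numer_root K i)) a
        = root_weight K i * beta_quot (real a - numer_root K i) N"
      by simp
  qed
  finally show ?thesis .
qed

lemma fdiff_inverse_harm_approx_bounds:
  assumes K: "K \<ge> 1" and N: "N \<ge> 1" and a: "a \<ge> 1"
  defines "d \<equiv> fdiff N (\<lambda>j. 1 / harm_approx K (real j) - basel_inv K / real j) a"
  shows "0 \<le> d \<and> d \<le> beta_quot (real a + 1) (N - 1)"
proof -
  have term_bounds: "0 \<le> root_weight K i * beta_quot (real a - numer_root K i) N
      \<and> root_weight K i * beta_quot (real a - numer_root K i) N \<le> beta_quot (real a + real i) N"
    if i: "i \<in> {1..<K}" for i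
  proof -
    have "real a + real i < real a - numer_root K i"
      using numer_root[of i K] i by auto
    then have "beta_quot (real a - numer_root K i) N \<le> beta_quot (real a + real i) N"
      "0 < beta_quot (real a - numer_root K i) N"
      using a by (auto intro!: beta_quot_antimono beta_quot_pos)
    moreover have "0 < root_weight K i" "root_weight K i < 1"
      using root_weight_bounds[of i K] i by auto
    moreover have "root_weight K i * beta_quot (real a - numer_root K i) N
        \<le> beta_quot (real a - numer_root K i) N"
      using calculation by (intro mult_left_le_one_le) auto
    ultimately show ?thesis
      by (meson less_imp_le mult_pos_pos order.trans)
  qed
  have "d \<le> (\<Sum>i\<in>{1..<K}. beta_quot (real a + real i) N)"
    unfolding d_def fdiff_inverse_harm_approx[OF K N a]
    by (rule sum_mono) (use term_bounds in blast)
  also have "\<dots> = (\<Sum>i=1..K-1. beta_quot (real a + real i) (Suc (N - 1)))"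
    using N K by (intro sum.cong) auto
  also have "\<dots> \<le> beta_quot (real a + 1) (N - 1)"
    using a by (intro sum_beta_quot_le) simp
  finally show ?thesis
    unfolding d_def fdiff_inverse_harm_approx[OF K N a]
    using term_bounds by (auto intro: sum_nonneg)
qed

lemma fdiff_inverse_harm_bounds:
  assumes N: "N \<ge> 1" and a: "a \<ge> 1"
  defines "d \<equiv> fdiff N (\<lambda>j. 1 / harm j - 6 / pi\<^sup>2 / real j) a"
  shows "0 \<le> d \<and> d \<le> beta_quot (real a + 1) (N - 1)"
proof -
  define d_approx where
    "d_approx K = fdiff N (\<lambda>j. 1 / harm_approx K (real j) - basel_inv K / real j) a" for K
  have "harm (a + l) \<noteq> (0::real)" for l
    using a by (intro harm_neq_0) simp
  then have "d_approx \<longlonglongrightarrow> d"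
    unfolding d_approx_def d_def fdiff_def
    using a by (intro tendsto_intros harm_approx_tendsto basel_inv_tendsto) auto
  moreover have "\<forall>\<^sub>F K in sequentially. 0 \<le> d_approx K \<and> d_approx K \<le> beta_quot (real a + 1) (N - 1)"
    using eventually_ge_at_top[of 1]
    by eventually_elim (use fdiff_inverse_harm_approx_bounds[OF _ N a] in \<open>simp add: d_approx_def\<close>)
  ultimately show ?thesis
    by (auto intro: tendsto_lowerbound tendsto_upperbound elim: eventually_mono)
qed

section \<open>Binomial sums\<close>

lemma sum_triangle_swap:
  fixes g :: "nat \<Rightarrow> nat \<Rightarrow> real"
  shows "(\<Sum>b=p..M. \<Sum>c=b..M. g b c) = (\<Sum>c=p..M. \<Sum>b=p..c. g b c)"
proof -
  have "(\<Sum>b=p..M. \<Sum>c=b..M. g b c) = (\<Sum>b\<in>{p..M}. \<Sum>c | c \<in> {p..M} \<and> b \<le> c. g b c)"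
    by (intro sum.cong) auto
  also have "\<dots> = (\<Sum>c\<in>{p..M}. \<Sum>b | b \<in> {p..M} \<and> b \<le> c. g b c)"
    by (rule sum.swap_restrict) auto
  also have "\<dots> = (\<Sum>c=p..M. \<Sum>b=p..c. g b c)"
    by (intro sum.cong) auto
  finally show ?thesis .
qed

lemma sum_alternating_telescope:
  fixes u :: "nat \<Rightarrow> real"
  shows "(\<Sum>r=1..m. (-1)^(r+1) * (u (r - 1) + u r)) = u 0 + (-1)^(m+1) * u m"
  by (induction m) (simp_all add: algebra_simps)

lemma sum_alternating_choose:
  assumes "m \<ge> 1"
  shows "(\<Sum>r=1..m. (-1)^(r+1) * real (a + m choose (a + r))) = real (a + m - 1 choose a)"
proof -
  let ?u = "\<lambda>r. real (a + m - 1 choose (a + r))"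
  have "(\<Sum>r=1..m. (-1)^(r+1) * real (a + m choose (a + r))) = (\<Sum>r=1..m. (-1)^(r+1) * (?u (r - 1) + ?u r))"
  proof (intro sum.cong refl)
    fix r assume r: "r \<in> {1..m}"
    then have "a + m = Suc (a + m - 1)" "a + r = Suc (a + (r - 1))"
      using assms by auto
    then show "(-1)^(r+1) * real (a + m choose (a + r)) = (-1)^(r+1) * (?u (r - 1) + ?u r)"
      by (metis binomial_Suc_Suc of_nat_add)
  qed
  also have "\<dots> = ?u 0 + (-1)^(m+1) * ?u m"
    by (rule sum_alternating_telescope)
  finally show ?thesis
    using assms by simp
qed

lemma Suc_mult_choose_Suc_absorb:
  assumes "r \<le> Suc j"
  shows "Suc j * (a + Suc j choose (a + r)) = (a + Suc j) * (a + j choose (a + r)) + r * (a + Suc j choose (a + r))"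
proof -
  have "(Suc j - r) * (a + Suc j choose (a + r)) = (a + Suc j) * (a + j choose (a + r))"
    using binomial_absorb_comp[of "a + Suc j" "a + r"] by simp
  with assms show ?thesis
    by (metis add_mult_distrib le_add_diff_inverse2)
qed

lemma sum_alternating_choose_div_Suc:
  fixes a j :: nat
  defines "S \<equiv> \<lambda>j. (\<Sum>r=1..j. (-1)^(r+1) * real (a + j choose (a + r)) / real r)"
  shows "real (Suc j) * S (Suc j) = real (a + Suc j) * S j + real (a + j choose a)"
proof -
  have "real (Suc j) * ((-1)^(r+1) * real (a + Suc j choose (a + r)) / real r)
      = real (a + Suc j) * ((-1)^(r+1) * real (a + j choose (a + r)) / real r)
        + (-1)^(r+1) * real (a + Suc j choose (a + r))"
    if r: "r \<in> {1..Suc j}" for r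
  proof -
    define C0 C1 where "C0 = real (a + j choose (a + r))" and "C1 = real (a + Suc j choose (a + r))"
    have C: "real (Suc j) * C1 = real (a + Suc j) * C0 + real r * C1"
      using Suc_mult_choose_Suc_absorb[of r j a] r unfolding C0_def C1_def
      by (metis atLeastAtMost_iff of_nat_add of_nat_mult)
    have "real (Suc j) * ((-1)^(r+1) * C1 / real r) = (-1)^(r+1) * (real (Suc j) * C1) / real r"
      by simp
    also have "\<dots> = real (a + Suc j) * ((-1)^(r+1) * C0 / real r) + (-1)^(r+1) * C1"
      unfolding C using r by (simp add: field_simps)
    finally show ?thesis
      unfolding C0_def C1_def .
  qed
  then have "real (Suc j) * S (Suc j)
      = real (a + Suc j) * (\<Sum>r=1..Suc j. (-1)^(r+1) * real (a + j choose (a + r)) / real r)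
        + (\<Sum>r=1..Suc j. (-1)^(r+1) * real (a + Suc j choose (a + r)))"
    unfolding S_def sum_distrib_left sum.distrib[symmetric] by (rule sum.cong[OF refl])
  also have "(\<Sum>r=1..Suc j. (-1)^(r+1) * real (a + j choose (a + r)) / real r) = S j"
    by (simp add: S_def)
  also have "(\<Sum>r=1..Suc j. (-1)^(r+1) * real (a + Suc j choose (a + r))) = real (a + j choose a)"
    using sum_alternating_choose[of "Suc j" a] by simp
  finally show ?thesis .
qed

lemma sum_alternating_choose_div:
  "(\<Sum>r=1..j. (-1)^(r+1) * real (a + j choose (a + r)) / real r)
    = real (a + j choose a) * (harm (a + j) - harm a)"
proof -
  define S where "S j = (\<Sum>r=1..j. (-1)^(r+1) * real (a + j choose (a + r)) / real r)" for j
  have "S j = real (a + j choose a) * (harm (a + j) - harm a)"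
  proof (induction j)
    case (Suc j)
    define C0 C1 where "C0 = real (a + j choose a)" and "C1 = real (a + Suc j choose a)"
    have "Suc j * (a + Suc j choose a) = (a + Suc j) * (a + j choose a)"
      using binomial_absorb_comp[of "a + Suc j" a] by simp
    then have C: "real (a + Suc j) * C0 = real (Suc j) * C1"
      unfolding C0_def C1_def by (metis of_nat_mult)
    have "real (Suc j) * S (Suc j) = real (a + Suc j) * S j + C0"
      using sum_alternating_choose_div_Suc[of j a] unfolding S_def C0_def .
    also have "\<dots> = real (a + Suc j) * C0 * (harm (a + j) + 1 / real (a + Suc j) - harm a)"
      unfolding Suc.IH C0_def[symmetric] by (simp add: field_simps del: of_nat_Suc of_nat_add)
    also have "harm (a + j) + 1 / real (a + Suc j) = harm (a + Suc j)"
      by (simp add: harm_Suc inverse_eq_divide)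
    finally have "real (Suc j) * S (Suc j) = real (Suc j) * (C1 * (harm (a + Suc j) - harm a))"
      unfolding C by (simp only: mult.assoc)
    then show ?case
      unfolding C1_def by simp
  qed (simp add: S_def)
  then show ?thesis
    by (simp add: S_def)
qed

lemma minus_one_power_diff:
  assumes "r \<le> j"
  shows "(-1::real)^(j - r) = (-1)^j * (-1)^r"
proof -
  have "(-1::real)^(j - r) = (-1)^(j - r) * ((-1)^r * (-1)^r)"
    by (simp flip: power_add)
  also have "\<dots> = (-1)^(j - r + r) * (-1)^r"
    by (simp only: power_add mult.assoc)
  finally show ?thesis
    using assms by simp
qed

lemma sum_choose_alternating_div:
  assumes "a < c"
  shows "(\<Sum>b=a+1..c. real (c choose b) * (-1)^(c - b) / real (b - a))
    = - ((-1)^(c - a) * real (c choose a) * (harm c - harm a))"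
proof -
  define j where "j = c - a"
  have c: "c = a + j"
    using assms by (simp add: j_def)
  have "(\<Sum>b=a+1..a+j. real (a + j choose b) * (-1)^(a + j - b) / real (b - a))
      = (\<Sum>r=1..j. real (a + j choose (a + r)) * (-1)^(j - r) / real r)"
    using sum.shift_bounds_cl_nat_ivl[of "\<lambda>b. real (a + j choose b) * (-1)^(a + j - b) / real (b - a)" 1 a j]
    by (simp add: add.commute)
  also have "\<dots> = - ((-1)^j * (\<Sum>r=1..j. (-1)^(r+1) * real (a + j choose (a + r)) / real r))"
    unfolding sum_distrib_left sum_negf[symmetric]
    by (intro sum.cong refl) (simp add: minus_one_power_diff)
  finally show ?thesis
    unfolding c sum_alternating_choose_div by simp
qed

definition binom_fdiff :: "(nat \<Rightarrow> real) \<Rightarrow> nat \<Rightarrow> nat \<Rightarrow> real" where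
  "binom_fdiff f M b = real (M choose b) * fdiff (M - b) f b"

lemma binom_fdiff_eq_sum:
  assumes "b \<le> M"
  shows "binom_fdiff f M b = (\<Sum>c=b..M. real (M choose c) * real (c choose b) * (-1)^(c - b) * f c)"
proof -
  have "binom_fdiff f M b
      = (\<Sum>l=0..M-b. real (M choose (l + b)) * real (l + b choose b) * (-1)^l * f (l + b))"
    unfolding binom_fdiff_def fdiff_def sum_distrib_left
  proof (intro sum.cong refl)
    fix l assume "l \<in> {0..M-b}"
    then have "(M choose (l + b)) * (l + b choose b) = (M choose b) * (M - b choose l)"
      using choose_mult[of b "l + b" M] assms by simp
    then show "real (M choose b) * (real (M - b choose l) * (-1)^l * f (b + l))
        = real (M choose (l + b)) * real (l + b choose b) * (-1)^l * f (l + b)"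
      by (simp add: add.commute flip: of_nat_mult)
  qed
  also have "\<dots> = (\<Sum>c=b..M. real (M choose c) * real (c choose b) * (-1)^(c - b) * f c)"
    using assms sum.shift_bounds_cl_nat_ivl[of "\<lambda>c. real (M choose c) * real (c choose b) * (-1)^(c - b) * f c" 0 b "M - b"]
    by simp
  finally show ?thesis .
qed

lemma sum_choose_choose_alternating:
  assumes "a < M"
  shows "(\<Sum>c=a..M. real (M choose c) * real (c choose a) * (-1)^(c - a)) = 0"
  using binom_fdiff_eq_sum[of a M "\<lambda>_. 1"] fdiff_const[of "M - a" 1 a] assms
  by (simp add: binom_fdiff_def)

lemma sum_binom_fdiff_div:
  assumes "a < M"
  shows "(\<Sum>b=a+1..M. binom_fdiff f M b / real (b - a))
    = - (\<Sum>c=a..M. real (M choose c) * real (c choose a) * (-1)^(c - a) * (harm c - harm a) * f c)"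
proof -
  have "(\<Sum>b=a+1..M. binom_fdiff f M b / real (b - a))
      = (\<Sum>b=a+1..M. \<Sum>c=b..M. real (M choose c) * real (c choose b) * (-1)^(c - b) * f c / real (b - a))"
    by (intro sum.cong refl) (simp add: binom_fdiff_eq_sum sum_divide_distrib)
  also have "\<dots> = (\<Sum>c=a+1..M. \<Sum>b=a+1..c. real (M choose c) * real (c choose b) * (-1)^(c - b) * f c / real (b - a))"
    by (rule sum_triangle_swap)
  also have "\<dots> = (\<Sum>c=a+1..M. real (M choose c) * f c * (\<Sum>b=a+1..c. real (c choose b) * (-1)^(c - b) / real (b - a)))"
    by (intro sum.cong refl) (simp add: sum_distrib_left algebra_simps)
  also have "\<dots> = - (\<Sum>c=a+1..M. real (M choose c) * real (c choose a) * (-1)^(c - a) * (harm c - harm a) * f c)"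
    unfolding sum_negf[symmetric]
  proof (intro sum.cong refl)
    fix c assume "c \<in> {a+1..M}"
    then have "a < c" by simp
    then show "real (M choose c) * f c * (\<Sum>b=a+1..c. real (c choose b) * (-1)^(c - b) / real (b - a))
        = - (real (M choose c) * real (c choose a) * (-1)^(c - a) * (harm c - harm a) * f c)"
      unfolding sum_choose_alternating_div[OF \<open>a < c\<close>] by (simp add: algebra_simps)
  qed
  also have "\<dots> = - (\<Sum>c=a..M. real (M choose c) * real (c choose a) * (-1)^(c - a) * (harm c - harm a) * f c)"
    using assms by (simp add: sum.atLeast_Suc_atMost[of a M])
  finally show ?thesis .
qed

lemma binom_fdiff_inverse_harm_rec:
  assumes a: "1 \<le> a" and aM: "a < M"
  defines "\<phi> \<equiv> \<lambda>j. 1 / harm j"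
  shows "harm a * binom_fdiff \<phi> M a = (\<Sum>b=a+1..M. binom_fdiff \<phi> M b / real (b - a))"
proof -
  define w where "w c = real (M choose c) * real (c choose a) * (-1)^(c - a)" for c
  have "harm a * binom_fdiff \<phi> M a = (\<Sum>c=a..M. w c * (harm a * \<phi> c))"
    unfolding binom_fdiff_eq_sum[OF less_imp_le[OF aM]] w_def sum_distrib_left by (simp add: algebra_simps)
  also have "\<dots> = (\<Sum>c=a..M. w c) - (\<Sum>c=a..M. w c * (harm c - harm a) * \<phi> c)"
    unfolding sum_subtractf[symmetric]
  proof (intro sum.cong refl)
    fix c assume "c \<in> {a..M}"
    then have "harm c \<noteq> (0::real)"
      using a by (intro harm_neq_0) simp
    then show "w c * (harm a * \<phi> c) = w c - w c * (harm c - harm a) * \<phi> c"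
      by (simp add: \<phi>_def field_simps)
  qed
  also have "(\<Sum>c=a..M. w c) = 0"
    unfolding w_def by (rule sum_choose_choose_alternating[OF aM])
  finally show ?thesis
    unfolding sum_binom_fdiff_div[OF aM] w_def by simp
qed

section \<open>The renewal kernel\<close>

text \<open>\<open>renewal n m\<close> sums, over all chains \<open>m = i\<^sub>0 < i\<^sub>1 < \<dots> < i\<^sub>r = n\<close>, the products of the
  step weights \<open>1 / (harm (i\<^sub>t - 1) * (i\<^sub>t - i\<^sub>t\<^sub>-\<^sub>1))\<close>; the definition splits off the last step.\<close>

function renewal :: "nat \<Rightarrow> nat \<Rightarrow> real" where
  "renewal n m = (if n < m then 0 else if n = m then 1
     else (\<Sum>i\<in>{m..<n}. renewal i m / (harm (n - 1) * real (n - i))))"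
  by pat_completeness auto
termination by (relation "Wellfounded.measure fst") auto

declare renewal.simps [simp del]

lemma renewal_less: "n < m \<Longrightarrow> renewal n m = 0"
  by (simp add: renewal.simps)

lemma renewal_same [simp]: "renewal n n = 1"
  by (simp add: renewal.simps)

lemma renewal_last_step:
  "m < n \<Longrightarrow> renewal n m = (\<Sum>i\<in>{m..<n}. renewal i m / (harm (n - 1) * real (n - i)))"
  by (subst renewal.simps) simp

lemma renewal_first_step:
  "m < n \<Longrightarrow> renewal n m = (\<Sum>j=m+1..n. renewal n j / (harm (j - 1) * real (j - m)))"
proof (induction n arbitrary: m rule: less_induct)
  case (less n)
  define p where "p i = 1 / (harm (n - 1) * real (n - i))" for i
  define q where "q j = 1 / (harm (j - 1) * real (j - m))" for j
  have "renewal n m = (\<Sum>i\<in>{m..<n}. renewal i m * p i)"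
    unfolding renewal_last_step[OF less.prems] p_def by (simp add: divide_inverse)
  also have "{m..<n} = insert m {m+1..n-1}"
    using less.prems by auto
  also have "(\<Sum>i\<in>insert m {m+1..n-1}. renewal i m * p i) = p m + (\<Sum>i=m+1..n-1. renewal i m * p i)"
    by simp
  also have "(\<Sum>i=m+1..n-1. renewal i m * p i) = (\<Sum>i=m+1..n-1. \<Sum>j=m+1..i. renewal i j * q j * p i)"
  proof (intro sum.cong refl)
    fix i assume "i \<in> {m+1..n-1}"
    then have "i < n" "m < i" by auto
    from less.IH[OF this] show "renewal i m * p i = (\<Sum>j=m+1..i. renewal i j * q j * p i)"
      by (simp add: q_def sum_distrib_right divide_inverse)
  qed
  also have "\<dots> = (\<Sum>j=m+1..n-1. \<Sum>i=j..n-1. renewal i j * q j * p i)"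
    by (rule sum_triangle_swap[symmetric])
  also have "\<dots> = (\<Sum>j=m+1..n-1. renewal n j * q j)"
  proof (intro sum.cong refl)
    fix j assume "j \<in> {m+1..n-1}"
    then have "j < n" by auto
    then have "renewal n j = (\<Sum>i=j..n-1. renewal i j * p i)"
      unfolding renewal_last_step[OF \<open>j < n\<close>] p_def
      by (intro sum.cong) (auto simp: divide_inverse)
    moreover have "(\<Sum>i=j..n-1. renewal i j * q j * p i) = (\<Sum>i=j..n-1. renewal i j * p i) * q j"
      unfolding sum_distrib_right by (simp add: mult_ac)
    ultimately show "(\<Sum>i=j..n-1. renewal i j * q j * p i) = renewal n j * q j"
      by simp
  qed
  also have "p m + (\<Sum>j=m+1..n-1. renewal n j * q j) = (\<Sum>j\<in>insert n {m+1..n-1}. renewal n j * q j)"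
    using less.prems by (simp add: p_def q_def)
  also have "insert n {m+1..n-1} = {m+1..n}"
    using less.prems by auto
  finally show ?case
    by (simp add: q_def divide_inverse)
qed

lemma renewal_closed_form:
  assumes "2 \<le> m" "m \<le> n"
  shows "renewal n m = harm (m - 1) * binom_fdiff (\<lambda>j. 1 / harm j) (n - 1) (m - 1)"
  using assms
proof (induction "n - m" arbitrary: m rule: less_induct)
  case less
  define V where "V = binom_fdiff (\<lambda>j. 1 / harm j) (n - 1)"
  show ?case
  proof (cases "m = n")
    case True
    with less.prems show ?thesis
      by (simp add: binom_fdiff_def harm_neq_0)
  next
    case False
    with less.prems have "m < n" by simp
    have "renewal n m = (\<Sum>j=m+1..n. renewal n j / (harm (j - 1) * real (j - m)))"
      by (rule renewal_first_step[OF \<open>m < n\<close>])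
    also have "\<dots> = (\<Sum>j=m+1..n. V (j - 1) / real (j - m))"
    proof (intro sum.cong refl)
      fix j assume j: "j \<in> {m+1..n}"
      then have "harm (j - 1) \<noteq> (0::real)"
        using less.prems by (intro harm_neq_0) auto
      moreover have "renewal n j = harm (j - 1) * V (j - 1)"
        unfolding V_def using j less.prems by (intro less.hyps) auto
      ultimately show "renewal n j / (harm (j - 1) * real (j - m)) = V (j - 1) / real (j - m)"
        by (simp add: V_def)
    qed
    also have "\<dots> = (\<Sum>b=(m-1)+1..n-1. V b / real (b - (m - 1)))"
      using less.prems \<open>m < n\<close>
      sum.shift_bounds_cl_nat_ivl[of "\<lambda>j. V (j - 1) / real (j - m)" m 1 "n - 1"]
      by (simp add: Suc_diff_le)
    also have "\<dots> = harm (m - 1) * V (m - 1)"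
      unfolding V_def using less.prems \<open>m < n\<close>
      by (intro binom_fdiff_inverse_harm_rec[symmetric]) auto
    finally show ?thesis
      by (simp add: V_def)
  qed
qed

lemma renewal_asymptotics:
  assumes k: "k \<ge> 2" and n: "k < n"
  defines "c \<equiv> 6 / pi\<^sup>2 * harm (k - 1) / real (k - 1)"
  shows "0 \<le> renewal n k - c \<and> renewal n k - c \<le> harm (k - 1) / real (n - k)"
proof -
  define a N where "a = k - 1" and "N = n - k"
  have a: "a \<ge> 1" and N: "N \<ge> 1" and aN: "a + N = n - 1" "n - 1 - a = N"
    using k n by (auto simp: a_def N_def)
  define d where "d = fdiff N (\<lambda>j. 1 / harm j - 6 / pi\<^sup>2 / real j) a"
  have "fdiff N (\<lambda>j. 1 / harm j) a = fdiff N (\<lambda>j. 6 / pi\<^sup>2 * (1 / (real j + 0)) + (1 / harm j - 6 / pi\<^sup>2 / real j)) a"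
    by (intro fdiff_cong) simp
  also have "\<dots> = 6 / pi\<^sup>2 * beta_quot (real a) N + d"
    unfolding fdiff_add fdiff_cmult d_def using fdiff_inverse[of a 0 N] a by simp
  finally have "renewal n k = harm a * (6 / pi\<^sup>2 * (real (a + N choose a) * beta_quot (real a) N)
      + real (a + N choose a) * d)"
    using renewal_closed_form[of k n] k n aN by (simp add: binom_fdiff_def a_def algebra_simps)
  also have "real (a + N choose a) * beta_quot (real a) N = 1 / real a"
    by (rule binomial_beta_quot[OF a])
  finally have "renewal n k - c = harm a * (real (a + N choose a) * d)"
    unfolding c_def a_def by (simp add: algebra_simps)
  moreover have "0 \<le> d" "real (a + N choose a) * d \<le> 1 / real N"
    using fdiff_inverse_harm_bounds[OF N a] binomial_beta_quot_shift[OF a N]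
    by (auto simp: d_def intro: order.trans[OF mult_left_mono])
  ultimately show ?thesis
    using harm_nonneg[of a]
    by (auto simp: a_def N_def intro: mult_left_mono order.trans[OF mult_left_mono])
qed

section \<open>Mean clade counts\<close>

lemma q_split_eq:
  "q_split n i = (if 1 \<le> i \<and> i \<le> n - 1 then real n / (2 * harm (n - 1)) / (real i * real (n - i)) else 0)"
  by (simp add: q_split_def harm_def inverse_eq_divide)

lemma q_split_nonneg: "q_split n i \<ge> 0"
  by (simp add: q_split_eq harm_nonneg)

lemma q_split_sym: "i \<le> n \<Longrightarrow> q_split n (n - i) = q_split n i"
  by (auto simp: q_split_eq mult.commute)

lemma q_split_pfrac:
  assumes "i \<in> {1..n-1}"
  shows "q_split n i = (1 / real i + 1 / real (n - i)) / (2 * harm (n - 1))"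
proof -
  have "(x + y) / (x * y) = 1 / x + 1 / y" if "x > 0" "y > 0" for x y :: real
    using that by (simp add: field_simps)
  moreover from assms have "real i > 0" "real (n - i) > 0" "real n = real i + real (n - i)"
    by auto
  ultimately have "real n / (real i * real (n - i)) = 1 / real i + 1 / real (n - i)"
    by metis
  moreover have "q_split n i = real n / (real i * real (n - i)) / (2 * harm (n - 1))"
    using assms by (simp add: q_split_eq mult_ac)
  ultimately show ?thesis
    by simp
qed

lemma sum_q_split:
  assumes n: "n \<ge> 2"
  shows "(\<Sum>i=1..n-1. q_split n i) = 1"
proof -
  have "(\<Sum>i=1..n-1. 1 / real (n - i)) = (\<Sum>i=1..n-1. 1 / real i)"
    by (rule sum.reindex_bij_witness[of _ "\<lambda>i. n - i" "\<lambda>i. n - i"]) auto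
  then have "(\<Sum>i=1..n-1. 1 / real i + 1 / real (n - i)) = 2 * harm (n - 1)"
    by (simp add: sum.distrib harm_def inverse_eq_divide)
  then show ?thesis
    using n harm_neq_0[of "n - 1"] by (simp add: q_split_pfrac sum_divide_distrib[symmetric])
qed

lemma pmf_q_pmf:
  assumes "n \<ge> 2"
  shows "pmf (q_pmf n) i = q_split n i"
proof -
  have "(\<integral>\<^sup>+x. ennreal (q_split n x) \<partial>count_space UNIV) = (\<Sum>x\<in>{1..n-1}. ennreal (q_split n x))"
    by (rule nn_integral_count_space') (auto simp: q_split_def)
  also have "\<dots> = 1"
    using sum_q_split[OF assms] by (simp add: q_split_nonneg sum_ennreal)
  finally show ?thesis
    unfolding q_pmf_def by (subst pmf_embed_pmf) (auto simp: q_split_nonneg)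
qed

lemma set_pmf_q_pmf: "n \<ge> 2 \<Longrightarrow> set_pmf (q_pmf n) \<subseteq> {1..n-1}"
  by (auto simp: set_pmf_eq pmf_q_pmf q_split_def split: if_splits)

lemma finite_set_pmf_dtcs_aux: "finite (set_pmf (dtcs_aux f n))"
proof (induction f arbitrary: n)
  case (Suc f)
  have "n \<ge> 2 \<Longrightarrow> finite (set_pmf (q_pmf n))"
    using set_pmf_q_pmf finite_subset by blast
  with Suc.IH show ?case by auto
qed simp

lemma leaves_dtcs_aux:
  "1 \<le> n \<Longrightarrow> n \<le> Suc f \<Longrightarrow> t \<in> set_pmf (dtcs_aux f n) \<Longrightarrow> leaves t = n"
proof (induction f arbitrary: n t)
  case (Suc f)
  show ?case
  proof (cases "n \<le> 1")
    case False
    then obtain i l r where i: "i \<in> set_pmf (q_pmf n)" and "l \<in> set_pmf (dtcs_aux f i)"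
      and "r \<in> set_pmf (dtcs_aux f (n - i))" and "t = Node l r"
      using Suc.prems by auto
    moreover have "1 \<le> i" "i \<le> n - 1"
      using set_pmf_q_pmf[of n] i False by auto
    ultimately have "leaves l = i" "leaves r = n - i"
      using Suc.prems by (auto intro: Suc.IH)
    then show ?thesis
      using \<open>t = Node l r\<close> \<open>1 \<le> i\<close> \<open>i \<le> n - 1\<close> by simp
  qed (use Suc.prems in simp)
qed simp

lemma leaves_pos: "leaves t > 0"
  by (induction t) auto

lemma nclades_0: "nclades 0 t = 0"
  by (induction t) (simp_all add: leaves_pos)

lemma nclades_1: "nclades 1 t = leaves t"
proof (induction t)
  case (Node l r)
  have "leaves l + leaves r \<noteq> 1"
    using leaves_pos[of l] leaves_pos[of r] by linarith
  with Node show ?case by simp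
qed simp

lemma expectation_bind_pmf_finite:
  fixes h :: "'b \<Rightarrow> real"
  assumes "finite (set_pmf p)" "\<And>x. x \<in> set_pmf p \<Longrightarrow> finite (set_pmf (g x))"
  shows "measure_pmf.expectation (p \<bind> g) h = measure_pmf.expectation p (\<lambda>x. measure_pmf.expectation (g x) h)"
  using assms by (simp add: pmf_expectation_bind[of "set_pmf p"] integral_measure_pmf[of "set_pmf p"])

lemma expectation_cong_set_pmf:
  fixes f g :: "'a \<Rightarrow> real"
  assumes "\<And>x. x \<in> set_pmf p \<Longrightarrow> f x = g x"
  shows "measure_pmf.expectation p f = measure_pmf.expectation p g"
  by (rule integral_cong_AE) (use assms in \<open>auto simp: AE_measure_pmf_iff\<close>)

lemma expectation_add_const:
  fixes h :: "'a \<Rightarrow> real"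
  assumes "finite (set_pmf p)"
  shows "measure_pmf.expectation p (\<lambda>x. c + h x) = c + measure_pmf.expectation p h"
  using assms by (subst Bochner_Integration.integral_add) (auto intro: integrable_measure_pmf_finite)

abbreviation mean_clades :: "nat \<Rightarrow> tree pmf \<Rightarrow> real" where
  "mean_clades k p \<equiv> measure_pmf.expectation p (\<lambda>t. real (nclades k t))"

lemma mean_clades_bind_Node:
  assumes fin: "finite (set_pmf L)" "finite (set_pmf R)"
    and leaves: "\<And>l r. l \<in> set_pmf L \<Longrightarrow> r \<in> set_pmf R \<Longrightarrow> leaves l + leaves r = n"
  shows "mean_clades k (L \<bind> (\<lambda>l. R \<bind> (\<lambda>r. return_pmf (Node l r))))
    = (if n = k then 1 else 0) + mean_clades k L + mean_clades k R"
proof -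
  let ?c = "if n = k then 1 else 0 :: real"
  have "mean_clades k (L \<bind> (\<lambda>l. R \<bind> (\<lambda>r. return_pmf (Node l r))))
      = measure_pmf.expectation L (\<lambda>l. measure_pmf.expectation R (\<lambda>r. real (nclades k (Node l r))))"
    using fin by (simp add: expectation_bind_pmf_finite)
  also have "\<dots> = measure_pmf.expectation L (\<lambda>l. measure_pmf.expectation R (\<lambda>r. (?c + real (nclades k l)) + real (nclades k r)))"
    using leaves by (intro expectation_cong_set_pmf) auto
  also have "\<dots> = measure_pmf.expectation L (\<lambda>l. (?c + mean_clades k R) + real (nclades k l))"
    using fin by (intro expectation_cong_set_pmf) (simp add: expectation_add_const)
  also have "\<dots> = ?c + mean_clades k L + mean_clades k R"
    using fin by (simp add: expectation_add_const)
  finally show ?thesis .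
qed

lemma mean_clades_dtcs_aux_Suc:
  assumes n: "2 \<le> n" "n \<le> Suc (Suc f)"
  shows "mean_clades k (dtcs_aux (Suc f) n) = (\<Sum>i=1..n-1. q_split n i *
    ((if n = k then 1 else 0) + mean_clades k (dtcs_aux f i) + mean_clades k (dtcs_aux f (n - i))))"
proof -
  let ?D = "dtcs_aux f"
  have "finite (set_pmf (q_pmf n))"
    using set_pmf_q_pmf[OF n(1)] finite_subset by blast
  then have "mean_clades k (dtcs_aux (Suc f) n)
      = measure_pmf.expectation (q_pmf n) (\<lambda>i. mean_clades k (?D i \<bind> (\<lambda>l. ?D (n - i) \<bind> (\<lambda>r. return_pmf (Node l r)))))"
    using n by (simp add: expectation_bind_pmf_finite finite_set_pmf_dtcs_aux)
  also have "\<dots> = (\<Sum>i\<in>{1..n-1}. pmf (q_pmf n) i *\<^sub>R mean_clades k (?D i \<bind> (\<lambda>l. ?D (n - i) \<bind> (\<lambda>r. return_pmf (Node l r)))))"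
    by (rule integral_measure_pmf) (use set_pmf_q_pmf[OF n(1)] in auto)
  also have "\<dots> = (\<Sum>i=1..n-1. q_split n i *
      ((if n = k then 1 else 0) + mean_clades k (?D i) + mean_clades k (?D (n - i))))"
  proof (intro sum.cong refl)
    fix i assume i: "i \<in> {1..n-1}"
    have "mean_clades k (?D i \<bind> (\<lambda>l. ?D (n - i) \<bind> (\<lambda>r. return_pmf (Node l r))))
        = (if n = k then 1 else 0) + mean_clades k (?D i) + mean_clades k (?D (n - i))"
      using i n leaves_dtcs_aux[of i f] leaves_dtcs_aux[of "n - i" f]
      by (intro mean_clades_bind_Node finite_set_pmf_dtcs_aux) auto
    then show "pmf (q_pmf n) i *\<^sub>R mean_clades k (?D i \<bind> (\<lambda>l. ?D (n - i) \<bind> (\<lambda>r. return_pmf (Node l r))))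
        = q_split n i * ((if n = k then 1 else 0) + mean_clades k (?D i) + mean_clades k (?D (n - i)))"
      by (simp add: pmf_q_pmf[OF n(1)])
  qed
  finally show ?thesis .
qed

lemma mean_clades_DTCS_eqI:
  fixes A :: "nat \<Rightarrow> real"
  assumes A_le_1: "\<And>n. n \<le> 1 \<Longrightarrow> A n = (if k = 1 then 1 else 0)"
    and A_rec: "\<And>n. n \<ge> 2 \<Longrightarrow> A n = (if n = k then 1 else 0) + (\<Sum>i=1..n-1. q_split n i * (A i + A (n - i)))"
  shows "mean_clades k (DTCS n) = A n"
proof -
  have "mean_clades k (dtcs_aux f n) = A n" if "n \<le> Suc f" for f
    using that
  proof (induction f arbitrary: n)
    case (Suc f)
    show ?case
    proof (cases "n \<le> 1")
      case False
      then have "mean_clades k (dtcs_aux (Suc f) n) = (\<Sum>i=1..n-1. q_split n i *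
          ((if n = k then 1 else 0) + mean_clades k (dtcs_aux f i) + mean_clades k (dtcs_aux f (n - i))))"
        using Suc.prems by (intro mean_clades_dtcs_aux_Suc) auto
      also have "\<dots> = (\<Sum>i=1..n-1. q_split n i * ((if n = k then 1 else 0) + A i + A (n - i)))"
      proof (intro sum.cong refl)
        fix i assume "i \<in> {1..n-1}"
        with Suc.prems have "i \<le> Suc f" "n - i \<le> Suc f" by auto
        then show "q_split n i * ((if n = k then 1 else 0) + mean_clades k (dtcs_aux f i) + mean_clades k (dtcs_aux f (n - i)))
            = q_split n i * ((if n = k then 1 else 0) + A i + A (n - i))"
          by (simp add: Suc.IH)
      qed
      also have "\<dots> = (if n = k then 1 else 0) * (\<Sum>i=1..n-1. q_split n i)
          + (\<Sum>i=1..n-1. q_split n i * (A i + A (n - i)))"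
        by (simp add: algebra_simps sum.distrib sum_distrib_left)
      finally show ?thesis
        using False sum_q_split A_rec by simp
    qed (use A_le_1 in simp)
  qed (use A_le_1 in simp)
  then show ?thesis
    by (simp add: DTCS_def)
qed

lemma mean_clades_DTCS_renewal:
  assumes k: "k \<ge> 2"
  shows "mean_clades k (DTCS n) = real n * renewal n k / real k"
proof (rule mean_clades_DTCS_eqI)
  fix n :: nat assume n: "n \<ge> 2"
  define A where "A i = real i * renewal i k / real k" for i
  have "(\<Sum>i=1..n-1. q_split n i * A (n - i)) = (\<Sum>i=1..n-1. q_split n i * A i)"
    by (rule sum.reindex_bij_witness[of _ "\<lambda>i. n - i" "\<lambda>i. n - i"]) (auto simp: q_split_sym)
  then have "(\<Sum>i=1..n-1. q_split n i * (A i + A (n - i))) = 2 * (\<Sum>i=1..n-1. q_split n i * A i)"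
    by (simp add: algebra_simps sum.distrib)
  also have "\<dots> = real n / real k * (\<Sum>i=1..n-1. renewal i k / (harm (n - 1) * real (n - i)))"
    unfolding sum_distrib_left
  proof (intro sum.cong refl)
    fix i assume "i \<in> {1..n-1}"
    then have "real i > 0" "real (n - i) > 0" by auto
    moreover have "harm (n - 1) \<noteq> (0::real)"
      using n by (intro harm_neq_0) simp
    moreover have "real k \<noteq> 0"
      using k by simp
    ultimately show "2 * (q_split n i * A i) = real n / real k * (renewal i k / (harm (n - 1) * real (n - i)))"
      unfolding q_split_eq A_def using \<open>i \<in> {1..n-1}\<close> by (simp add: field_simps)
  qed
  also have "(\<Sum>i=1..n-1. renewal i k / (harm (n - 1) * real (n - i)))
      = (if k < n then renewal n k else 0)"
  proof (cases "k < n")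
    case True
    have "(\<Sum>i=1..n-1. renewal i k / (harm (n - 1) * real (n - i)))
        = (\<Sum>i\<in>{k..<n}. renewal i k / (harm (n - 1) * real (n - i)))"
      using True k by (intro sum.mono_neutral_right) (auto simp: renewal_less)
    with True show ?thesis
      by (simp add: renewal_last_step)
  qed (auto simp: renewal_less intro!: sum.neutral)
  finally show "A n = (if n = k then 1 else 0) + (\<Sum>i=1..n-1. q_split n i * (A i + A (n - i)))"
    using n k by (auto simp: A_def renewal_less)
qed (use k in \<open>auto simp: renewal_less\<close>)

definition clade_density :: "nat \<Rightarrow> real" where
  "clade_density k = (if k \<le> 1 then real k else 6 / pi\<^sup>2 * harm (k - 1) / (real (k - 1) * real k))"

lemma mean_clades_DTCS_le_1:
  assumes "k \<le> 1" "n \<ge> 1"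
  shows "mean_clades k (DTCS n) = real k * real n"
proof -
  have "nclades k t = k * leaves t" for t
  proof (cases "k = 0")
    case False
    with assms(1) have "k = 1" by simp
    then show ?thesis
      using nclades_1[of t] by simp
  qed (simp add: nclades_0)
  then have "mean_clades k (DTCS n) = measure_pmf.expectation (DTCS n) (\<lambda>_. real k * real n)"
    using assms(2) leaves_dtcs_aux[of n n] unfolding DTCS_def
    by (intro expectation_cong_set_pmf) simp
  then show ?thesis
    by simp
qed

lemma mean_clades_DTCS_approx:
  assumes "k < n"
  shows "\<bar>mean_clades k (DTCS n) / real n - clade_density k\<bar> \<le> harm (k - 1) / real k / real (n - k)"
proof (cases "k \<le> 1")
  case True
  with assms show ?thesis
    by (auto simp: mean_clades_DTCS_le_1 clade_density_def le_Suc_eq harm_expand)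
next
  case False
  then have k: "k \<ge> 2" by simp
  define x where "x = renewal n k - 6 / pi\<^sup>2 * harm (k - 1) / real (k - 1)"
  have x: "0 \<le> x" "x \<le> harm (k - 1) / real (n - k)"
    using renewal_asymptotics[OF k assms] by (simp_all add: x_def)
  have "mean_clades k (DTCS n) / real n - clade_density k = x / real k"
    using k assms by (simp add: mean_clades_DTCS_renewal clade_density_def x_def field_simps)
  then have "\<bar>mean_clades k (DTCS n) / real n - clade_density k\<bar> = x / real k"
    using x by simp
  also have "\<dots> \<le> harm (k - 1) / real (n - k) / real k"
    using x by (intro divide_right_mono) auto
  finally show ?thesis
    by (simp add: mult.commute)
qed

lemma bigo_inverse_of_nat_shift:
  fixes f :: "nat \<Rightarrow> real"
  assumes bound: "\<And>n. m < n \<Longrightarrow> \<bar>f n\<bar> \<le> c / real (n - m)"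
  shows "f \<in> O(\<lambda>n. 1 / real n)"
proof (rule bigoI)
  have "c \<ge> 0"
    using bound[of "Suc m"] by simp
  show "\<forall>\<^sub>F n in at_top. norm (f n) \<le> 2 * c * norm (1 / real n)"
    using eventually_ge_at_top[of "2 * m + 1"]
  proof eventually_elim
    case (elim n)
    then have "real n / 2 \<le> real (n - m)" "real (n - m) > 0"
      by linarith+
    have "norm (f n) \<le> c / real (n - m)"
      using bound elim by simp
    also have "\<dots> \<le> c / (real n / 2)"
      using \<open>c \<ge> 0\<close> \<open>real n / 2 \<le> real (n - m)\<close> elim by (intro divide_left_mono) auto
    also have "\<dots> = 2 * c * norm (1 / real n)"
      by simp
    finally show ?case .
  qed
qed

theorem lemma4p1:
  fixes k :: nat
  shows "\<exists>\<mu>::real. (\<lambda>n::nat. measure_pmf.expectation (DTCS n) (\<lambda>t. real (nclades k t)) / real n - \<mu>)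
            \<in> O(\<lambda>n. 1 / real n)"
proof -
  have "(\<lambda>n. mean_clades k (DTCS n) / real n - clade_density k) \<in> O(\<lambda>n. 1 / real n)"
    using mean_clades_DTCS_approx by (rule bigo_inverse_of_nat_shift)
  then show ?thesis
    by blast
qed

end
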